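(* Let $k\in\mathbb C\setminus\mathbb Q$, let $n,m\in\mathbb Z_{>0}$, and let $p_0=n+k^{-1}m$. Two bipartitions $\alpha=(\lambda,\mu)$ and $\tilde\alpha=(\tilde\lambda,\tilde\mu)$ are $\mathcal E$-equivalent if and only if $$\alpha\setminus\pi=\tilde\alpha\setminus\pi$$ and $$\theta(\lambda\setminus\tilde\lambda)=\mu\setminus\tilde\mu,\qquad \theta(\tilde\lambda\setminus\lambda)=\tilde\mu\setminus\mu .$$
   Context: Partitions are identified with their Young diagrams, i.e. finite sets of boxes $(i,j)\in\mathbb Z_{>0}^2$ ($i$ = row, $j$ = column) closed under moving up or left. A bipartition is a pair $\alpha=(\lambda,\mu)$ of partitions; set-theoretic operations and inclusion of bipartitions are taken componentwise. The content of a box $x=(i,j)$ with parameter $a$ is $c(x,a)=(j-1)+k(i-1)+a$. For $r\ge1$ put $b_r(\alpha,k,p_0)=\sum_{x\in\lambda}c(x,0)^{r-1}+(-1)^r\sum_{y\in\mu}c(y,1+k-kp_0)^{r-1}$. Two bipartitions $\alpha,\tilde\alpha$ are called $\mathcal E$-equivalent (for the given $k,p_0$) if $b_r(\alpha,k,p_0)=b_r(\tilde\alpha,k,p_0)$ for all $r\ge1$. Let $\pi(n,m)=\{(i,j):1\le i\le n,\ 1\le j\le m\}$ be the rectangular diagram, $\pi=(\pi(n,m),\pi(n,m))$, and let $\theta:\pi(n,m)\to\pi(n,m)$ be the central symmetry $\theta(i,j)=(n-i+1,m-j+1)$. *)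

theory Defs
  imports Complex_Main
begin

type_synonym box = "nat \<times> nat"   (* (i,j): i = row, j = column *)

definition is_partition :: "box set \<Rightarrow> bool" where
  "is_partition P \<longleftrightarrow> finite P \<and>
     (\<forall>(i,j)\<in>P. 1 \<le> i \<and> 1 \<le> j) \<and>
     (\<forall>i j i' j'. (i,j) \<in> P \<longrightarrow> 1 \<le> i' \<longrightarrow> i' \<le> i \<longrightarrow> 1 \<le> j' \<longrightarrow> j' \<le> j \<longrightarrow> (i',j') \<in> P)"

type_synonym bipartition = "box set \<times> box set"

definition is_bipartition :: "bipartition \<Rightarrow> bool" where
  "is_bipartition \<alpha> \<longleftrightarrow> is_partition (fst \<alpha>) \<and> is_partition (snd \<alpha>)"

definition content :: "complex \<Rightarrow> box \<Rightarrow> complex \<Rightarrow> complex" where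
  "content k x a = of_nat (snd x - 1) + k * of_nat (fst x - 1) + a"

definition bsum :: "nat \<Rightarrow> bipartition \<Rightarrow> complex \<Rightarrow> complex \<Rightarrow> complex" where
  "bsum r \<alpha> k p0 =
     (\<Sum>x\<in>fst \<alpha>. content k x 0 ^ (r - 1))
     + (-1) ^ r * (\<Sum>y\<in>snd \<alpha>. content k y (1 + k - k * p0) ^ (r - 1))"

definition E_equiv :: "complex \<Rightarrow> complex \<Rightarrow> bipartition \<Rightarrow> bipartition \<Rightarrow> bool" where
  "E_equiv k p0 \<alpha> \<beta> \<longleftrightarrow> (\<forall>r\<ge>1. bsum r \<alpha> k p0 = bsum r \<beta> k p0)"

definition rect :: "nat \<Rightarrow> nat \<Rightarrow> box set" where
  "rect n m = {(i,j). 1 \<le> i \<and> i \<le> n \<and> 1 \<le> j \<and> j \<le> m}"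

definition theta :: "nat \<Rightarrow> nat \<Rightarrow> box \<Rightarrow> box" where
  "theta n m x = (n - fst x + 1, m - snd x + 1)"

definition bidiff :: "bipartition \<Rightarrow> bipartition \<Rightarrow> bipartition" where
  "bidiff \<alpha> \<beta> = (fst \<alpha> - fst \<beta>, snd \<alpha> - snd \<beta>)"

end

(*
  With p0 = n + m/k the content of a box y = (i,j) of mu with parameter 1 + k - k p0 is
  -((m - j) + k (n - i)), so b_(s+1)(alpha) is the s-th power sum of the signed family consisting
  of the contents c(x,0), x in lambda, with sign +, and the reflected contents (m - j) + k (n - i),
  (i,j) in mu, with sign -. A Vandermonde argument shows that all power sums of a finite signed
  family over a field of characteristic 0 determine the signed multiplicity of every value.
  Since k is irrational, both kinds of contents are injective in the box, and c(x,0) equals the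
  reflected content of y exactly when y lies in pi(n,m) and x = theta y. So the only cancellations
  are between x in lambda and theta x in mu inside the rectangle, which is the stated criterion.
*)

(* Defs is imported last so that content means Defs.content, not Polynomial.content. *)
theory Submission
  imports "HOL-Computational_Algebra.Polynomial" Defs
begin

lemma power_sums_vanish_imp_coeffs_vanish:
  fixes w :: "'a::field \<Rightarrow> 'a"
  assumes "finite Z" and "\<And>s. (\<Sum>z\<in>Z. w z * z ^ s) = 0" and "z \<in> Z"
  shows "w z = 0"
proof -
  define p where "p = (\<Prod>v\<in>Z - {z}. [:- v, 1:])"
  \<comment> \<open>\<open>p\<close> vanishes on \<open>Z - {z}\<close> but not at \<open>z\<close>, while \<open>\<Sum>y\<in>Z. w y * poly p y\<close> is a
     linear combination of the vanishing power sums.\<close>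
  have "(\<Sum>y\<in>Z. w y * poly p y) = (\<Sum>i\<le>degree p. coeff p i * (\<Sum>y\<in>Z. w y * y ^ i))"
    by (simp add: poly_altdef sum_distrib_left sum.swap[of _ Z] algebra_simps)
  also have "\<dots> = 0"
    using assms(2) by simp
  also have "(\<Sum>y\<in>Z. w y * poly p y) = w z * poly p z"
    using assms(1,3) by (simp add: sum.remove p_def poly_prod, intro sum.neutral) auto
  finally show ?thesis
    using assms(1) by (simp add: p_def poly_prod)
qed

lemma sum_power_eq_sum_multiplicity:
  fixes f :: "'b \<Rightarrow> 'a::comm_semiring_1"
  assumes "finite A" and "finite Z" and "f ` A \<subseteq> Z"
  shows "(\<Sum>x\<in>A. f x ^ s) = (\<Sum>z\<in>Z. of_nat (card {x\<in>A. f x = z}) * z ^ s)"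
proof -
  have "(\<Sum>x\<in>A. f x ^ s) = (\<Sum>z\<in>Z. \<Sum>x\<in>{x\<in>A. f x = z}. f x ^ s)"
    using sum.group[OF assms, of "\<lambda>x. f x ^ s"] by simp
  also have "\<dots> = (\<Sum>z\<in>Z. of_nat (card {x\<in>A. f x = z}) * z ^ s)"
    by (intro sum.cong) auto
  finally show ?thesis .
qed

lemma power_sums_eq_imp_multiplicities_eq:
  fixes f g :: "'b \<Rightarrow> 'a::field_char_0"
  assumes fin: "finite A" "finite B" "finite A'" "finite B'"
    and eq: "\<And>s. (\<Sum>x\<in>A. f x ^ s) - (\<Sum>y\<in>B. g y ^ s) = (\<Sum>x\<in>A'. f x ^ s) - (\<Sum>y\<in>B'. g y ^ s)"
  shows "int (card {x\<in>A. f x = z}) - int (card {y\<in>B. g y = z})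
       = int (card {x\<in>A'. f x = z}) - int (card {y\<in>B'. g y = z})"
proof -
  define Z where "Z = insert z (f ` A \<union> g ` B \<union> f ` A' \<union> g ` B')"
  define w :: "'a \<Rightarrow> 'a" where "w u =
    of_nat (card {x\<in>A. f x = u}) - of_nat (card {y\<in>B. g y = u})
    - (of_nat (card {x\<in>A'. f x = u}) - of_nat (card {y\<in>B'. g y = u}))" for u
  have "finite Z" using fin by (simp add: Z_def)
  moreover have "(\<Sum>u\<in>Z. w u * u ^ s) = 0" for s
    using eq[of s] fin \<open>finite Z\<close>
    by (simp add: w_def sum_subtractf left_diff_distrib
        sum_power_eq_sum_multiplicity[where Z = Z] Z_def image_subset_iff)
  ultimately have "w z = 0"
    by (rule power_sums_vanish_imp_coeffs_vanish) (simp add: Z_def)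
  then have "(of_int (int (card {x\<in>A. f x = z}) - int (card {y\<in>B. g y = z})) :: 'a)
      = of_int (int (card {x\<in>A'. f x = z}) - int (card {y\<in>B'. g y = z}))"
    by (simp add: w_def)
  then show ?thesis
    by (simp only: of_int_eq_iff)
qed

lemma of_int_comb_eq_iff:
  fixes k :: "'a::field_char_0"
  assumes "k \<notin> \<rat>"
  shows "of_int a + k * of_int b = of_int c + k * of_int d \<longleftrightarrow> a = c \<and> b = d"
proof
  assume eq: "of_int a + k * of_int b = of_int c + k * of_int d"
  show "a = c \<and> b = d"
  proof (cases "b = d")
    case False
    with eq have "k = of_int (c - a) / of_int (b - d)"
      by (simp add: field_simps)
    with assms show ?thesis by simp
  qed (use eq in simp)
qed simp

definition pos_boxes :: "box set" where
  "pos_boxes = {x. 1 \<le> fst x \<and> 1 \<le> snd x}"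

lemma partition_subset_pos_boxes: "is_partition P \<Longrightarrow> P \<subseteq> pos_boxes"
  unfolding is_partition_def pos_boxes_def by auto

lemma rect_subset_pos_boxes: "rect n m \<subseteq> pos_boxes"
  unfolding rect_def pos_boxes_def by auto

lemma theta_in_rect: "x \<in> rect n m \<Longrightarrow> theta n m x \<in> rect n m"
  by (cases x) (auto simp: rect_def theta_def)

lemma theta_theta: "x \<in> rect n m \<Longrightarrow> theta n m (theta n m x) = x"
  by (cases x) (auto simp: rect_def theta_def)

lemma inj_on_theta: "inj_on (theta n m) (rect n m)"
  by (metis inj_onI theta_theta)

lemma theta_eq_iff: "y \<in> rect n m \<and> x = theta n m y \<longleftrightarrow> x \<in> rect n m \<and> y = theta n m x"
  using theta_in_rect theta_theta by metis

lemma theta_image_eq: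
  assumes "A \<subseteq> rect n m" and "B \<subseteq> rect n m"
    and "\<And>x. x \<in> rect n m \<Longrightarrow> x \<in> A \<longleftrightarrow> theta n m x \<in> B"
  shows "theta n m ` A = B"
proof
  show "theta n m ` A \<subseteq> B"
    using assms by (auto simp: theta_theta)
  show "B \<subseteq> theta n m ` A"
  proof
    fix y assume "y \<in> B"
    then have "y \<in> rect n m" using assms(2) by blast
    then have "theta n m y \<in> A" and "y = theta n m (theta n m y)"
      using \<open>y \<in> B\<close> assms(3) by (auto simp: theta_theta theta_in_rect)
    then show "y \<in> theta n m ` A" by blast
  qed
qed

text \<open>For \<open>p\<^sub>0 = n + m / k\<close> the content \<open>c(y, 1 + k - k p\<^sub>0)\<close> of a box \<open>y\<close> of \<open>\<mu>\<close> is
  \<open>- reflected_content k n m y\<close>; on the rectangle, \<open>reflected_content k n m (\<theta> x) = c(x, 0)\<close>.\<close>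

definition reflected_content :: "complex \<Rightarrow> nat \<Rightarrow> nat \<Rightarrow> box \<Rightarrow> complex" where
  "reflected_content k n m y = (of_nat m - of_nat (snd y)) + k * (of_nat n - of_nat (fst y))"

lemma content_as_int_comb:
  "x \<in> pos_boxes \<Longrightarrow> content k x 0 = of_int (int (snd x) - 1) + k * of_int (int (fst x) - 1)"
  by (simp add: pos_boxes_def content_def of_nat_diff)

lemma reflected_content_as_int_comb:
  "reflected_content k n m y = of_int (int m - int (snd y)) + k * of_int (int n - int (fst y))"
  by (simp add: reflected_content_def)

lemma content_eq_iff:
  assumes "k \<notin> \<rat>" and "x \<in> pos_boxes" and "x' \<in> pos_boxes"
  shows "content k x 0 = content k x' 0 \<longleftrightarrow> x = x'"
  unfolding content_as_int_comb[OF assms(2)] content_as_int_comb[OF assms(3)]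
    of_int_comb_eq_iff[OF assms(1)]
  using assms(2,3) by (auto simp: pos_boxes_def prod_eq_iff)

lemma reflected_content_eq_iff:
  assumes "k \<notin> \<rat>"
  shows "reflected_content k n m y = reflected_content k n m y' \<longleftrightarrow> y = y'"
  unfolding reflected_content_as_int_comb of_int_comb_eq_iff[OF assms] by (auto simp: prod_eq_iff)

lemma content_eq_reflected_content_iff:
  assumes "k \<notin> \<rat>" and "x \<in> pos_boxes" and "y \<in> pos_boxes"
  shows "content k x 0 = reflected_content k n m y \<longleftrightarrow> y \<in> rect n m \<and> x = theta n m y"
  unfolding content_as_int_comb[OF assms(2)] reflected_content_as_int_comb
    of_int_comb_eq_iff[OF assms(1)]
  using assms(2,3) by (cases x, cases y) (auto simp: pos_boxes_def rect_def theta_def)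

lemma reflected_content_theta:
  "x \<in> rect n m \<Longrightarrow> reflected_content k n m (theta n m x) = content k x 0"
  by (cases x) (auto simp: rect_def theta_def content_def reflected_content_def of_nat_diff)

definition signed_power_sum :: "complex \<Rightarrow> nat \<Rightarrow> nat \<Rightarrow> bipartition \<Rightarrow> nat \<Rightarrow> complex" where
  "signed_power_sum k n m \<alpha> s =
     (\<Sum>x\<in>fst \<alpha>. content k x 0 ^ s) - (\<Sum>y\<in>snd \<alpha>. reflected_content k n m y ^ s)"

lemma bsum_Suc_eq_signed_power_sum:
  assumes "k \<noteq> 0" and "snd \<alpha> \<subseteq> pos_boxes"
  shows "bsum (Suc s) \<alpha> k (of_nat n + of_nat m / k) = signed_power_sum k n m \<alpha> s"
proof -
  have kp: "k * (of_nat n + of_nat m / k) = k * of_nat n + of_nat m"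
    using assms(1) by (simp add: distrib_left)
  have "content k y (1 + k - k * (of_nat n + of_nat m / k)) ^ s
      = (-1) ^ s * reflected_content k n m y ^ s" if "y \<in> snd \<alpha>" for y
  proof -
    have "1 \<le> fst y" "1 \<le> snd y" using that assms(2) by (auto simp: pos_boxes_def)
    then have "content k y (1 + k - k * (of_nat n + of_nat m / k)) = - reflected_content k n m y"
      unfolding content_def kp reflected_content_def by (simp add: of_nat_diff algebra_simps)
    then show ?thesis
      by (simp only: power_minus[of "reflected_content k n m y"])
  qed
  then show ?thesis
    by (simp add: bsum_def signed_power_sum_def sum_distrib_left sum_negf)
qed

lemma E_equiv_iff_signed_power_sums_eq:
  assumes "k \<noteq> 0" and "snd \<alpha> \<subseteq> pos_boxes" and "snd \<beta> \<subseteq> pos_boxes"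
  shows "E_equiv k (of_nat n + of_nat m / k) \<alpha> \<beta> \<longleftrightarrow>
    (\<forall>s. signed_power_sum k n m \<alpha> s = signed_power_sum k n m \<beta> s)"
proof -
  have "(\<forall>r\<ge>1. Q r) \<longleftrightarrow> (\<forall>s. Q (Suc s))" for Q :: "nat \<Rightarrow> bool"
  proof (intro iffI allI impI)
    fix r :: nat assume "\<forall>s. Q (Suc s)" and "1 \<le> r"
    then show "Q r" by (cases r) auto
  qed simp
  then show ?thesis
    by (simp only: E_equiv_def bsum_Suc_eq_signed_power_sum[OF assms(1,2)]
      bsum_Suc_eq_signed_power_sum[OF assms(1,3)])
qed

lemma card_content_fiber:
  assumes "k \<notin> \<rat>" and "P \<subseteq> pos_boxes" and "x \<in> pos_boxes"
  shows "card {x'\<in>P. content k x' 0 = content k x 0} = of_bool (x \<in> P)"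
proof -
  have "{x'\<in>P. content k x' 0 = content k x 0} = P \<inter> {x}"
    using assms(2) content_eq_iff[OF assms(1) _ assms(3)] by auto
  then show ?thesis by (simp add: Int_insert_right)
qed

lemma card_reflected_content_fiber:
  assumes "k \<notin> \<rat>"
  shows "card {y\<in>Q. reflected_content k n m y = reflected_content k n m y0} = of_bool (y0 \<in> Q)"
proof -
  have "{y\<in>Q. reflected_content k n m y = reflected_content k n m y0} = Q \<inter> {y0}"
    using reflected_content_eq_iff[OF assms] by auto
  then show ?thesis by (simp add: Int_insert_right)
qed

lemma card_reflected_content_fiber_content:
  assumes "k \<notin> \<rat>" and "Q \<subseteq> pos_boxes" and "x \<in> pos_boxes"
  shows "card {y\<in>Q. reflected_content k n m y = content k x 0}
    = of_bool (x \<in> rect n m \<and> theta n m x \<in> Q)"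
proof -
  have "{y\<in>Q. reflected_content k n m y = content k x 0} = {y\<in>Q. x \<in> rect n m \<and> y = theta n m x}"
    using assms(2) content_eq_reflected_content_iff[OF assms(1,3)] theta_eq_iff
    by (metis (no_types, lifting) subsetD)
  also have "\<dots> = (if x \<in> rect n m \<and> theta n m x \<in> Q then {theta n m x} else {})"
    by auto
  finally show ?thesis by simp
qed

lemma content_fiber_reflected_content:
  assumes "k \<notin> \<rat>" and "P \<subseteq> pos_boxes" and "y \<in> pos_boxes" and "y \<notin> rect n m"
  shows "{x\<in>P. content k x 0 = reflected_content k n m y} = {}"
  using assms(2,4) content_eq_reflected_content_iff[OF assms(1) _ assms(3)] by auto

lemma conditions_of_signed_power_sums_eq:
  assumes "k \<notin> \<rat>"
    and fin: "finite la" "finite mu" "finite la'" "finite mu'"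
    and pos: "la \<subseteq> pos_boxes" "mu \<subseteq> pos_boxes" "la' \<subseteq> pos_boxes" "mu' \<subseteq> pos_boxes"
    and eq: "\<And>s. signed_power_sum k n m (la, mu) s = signed_power_sum k n m (la', mu') s"
  shows "la - rect n m = la' - rect n m \<and> mu - rect n m = mu' - rect n m \<and>
    theta n m ` (la - la') = mu - mu' \<and> theta n m ` (la' - la) = mu' - mu"
proof -
  have mult: "int (card {x\<in>la. content k x 0 = z}) - int (card {y\<in>mu. reflected_content k n m y = z})
    = int (card {x\<in>la'. content k x 0 = z}) - int (card {y\<in>mu'. reflected_content k n m y = z})"
    for z
    by (intro power_sums_eq_imp_multiplicities_eq fin) (use eq in \<open>simp add: signed_power_sum_def\<close>)
  have content_mult: "of_bool (x \<in> la) - of_bool (x \<in> rect n m \<and> theta n m x \<in> mu)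
    = (of_bool (x \<in> la') - of_bool (x \<in> rect n m \<and> theta n m x \<in> mu') :: int)"
    if "x \<in> pos_boxes" for x
    using mult[of "content k x 0"] that assms(1) pos
    by (simp add: card_content_fiber card_reflected_content_fiber_content)
  have outside_mu: "y \<in> mu \<longleftrightarrow> y \<in> mu'" if "y \<in> pos_boxes" "y \<notin> rect n m" for y
    using mult[of "reflected_content k n m y"] that assms(1) pos
    by (simp add: card_reflected_content_fiber content_fiber_reflected_content of_bool_eq_iff)
  have la_outside: "la - rect n m = la' - rect n m"
    using content_mult pos by (fastforce split: if_splits)
  moreover have mu_outside: "mu - rect n m = mu' - rect n m"
    using outside_mu pos by blast
  moreover have matched: "x \<in> la - la' \<longleftrightarrow> theta n m x \<in> mu - mu'"
    "x \<in> la' - la \<longleftrightarrow> theta n m x \<in> mu' - mu" if "x \<in> rect n m" for x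
    using content_mult[OF subsetD[OF rect_subset_pos_boxes that]] that
    by (auto simp: of_bool_def split: if_splits)
  moreover have "theta n m ` (la - la') = mu - mu'"
    by (rule theta_image_eq) (use la_outside mu_outside matched in blast)+
  moreover have "theta n m ` (la' - la) = mu' - mu"
    by (rule theta_image_eq) (use la_outside mu_outside matched in blast)+
  ultimately show ?thesis by blast
qed

lemma signed_power_sum_eq_Int:
  assumes "finite la" and "finite mu"
    and "la - la' \<subseteq> rect n m" and "theta n m ` (la - la') = mu - mu'"
  shows "signed_power_sum k n m (la, mu) s = signed_power_sum k n m (la \<inter> la', mu \<inter> mu') s"
proof -
  have "(\<Sum>y\<in>mu - mu'. reflected_content k n m y ^ s)
      = (\<Sum>x\<in>la - la'. reflected_content k n m (theta n m x) ^ s)"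
    unfolding assms(4)[symmetric]
    by (rule sum.reindex[OF inj_on_subset[OF inj_on_theta assms(3)], unfolded comp_def])
  also have "\<dots> = (\<Sum>x\<in>la - la'. content k x 0 ^ s)"
    using assms(3) by (intro sum.cong) (auto simp: reflected_content_theta)
  finally show ?thesis
    using sum.Int_Diff[OF assms(1), of "\<lambda>x. content k x 0 ^ s" la']
      sum.Int_Diff[OF assms(2), of "\<lambda>y. reflected_content k n m y ^ s" mu']
    by (simp add: signed_power_sum_def)
qed

lemma signed_power_sums_eq_iff:
  assumes "k \<notin> \<rat>"
    and fin: "finite la" "finite mu" "finite la'" "finite mu'"
    and pos: "la \<subseteq> pos_boxes" "mu \<subseteq> pos_boxes" "la' \<subseteq> pos_boxes" "mu' \<subseteq> pos_boxes"
  shows "(\<forall>s. signed_power_sum k n m (la, mu) s = signed_power_sum k n m (la', mu') s) \<longleftrightarrow>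
    la - rect n m = la' - rect n m \<and> mu - rect n m = mu' - rect n m \<and>
    theta n m ` (la - la') = mu - mu' \<and> theta n m ` (la' - la) = mu' - mu"
    (is "_ \<longleftrightarrow> ?conditions")
proof
  assume "\<forall>s. signed_power_sum k n m (la, mu) s = signed_power_sum k n m (la', mu') s"
  then show ?conditions
    by (intro conditions_of_signed_power_sums_eq[OF assms]) simp
next
  assume conditions: ?conditions
  then have "la - la' \<subseteq> rect n m" and "la' - la \<subseteq> rect n m"
    by auto
  moreover have "theta n m ` (la - la') = mu - mu'" and "theta n m ` (la' - la) = mu' - mu"
    using conditions by simp_all
  ultimately have "signed_power_sum k n m (la, mu) s = signed_power_sum k n m (la \<inter> la', mu \<inter> mu') s"
    and "signed_power_sum k n m (la', mu') s = signed_power_sum k n m (la' \<inter> la, mu' \<inter> mu) s"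
    for s
    by (simp_all add: signed_power_sum_eq_Int fin)
  then show "\<forall>s. signed_power_sum k n m (la, mu) s = signed_power_sum k n m (la', mu') s"
    by (simp add: Int_commute)
qed

theorem mainTheorem1:
  fixes k :: complex and n m :: nat and \<alpha> \<beta> :: bipartition
  assumes "k \<notin> \<rat>" and "n > 0" and "m > 0"
    and "is_bipartition \<alpha>" and "is_bipartition \<beta>"
  shows "E_equiv k (of_nat n + of_nat m / k) \<alpha> \<beta> \<longleftrightarrow>
     (bidiff \<alpha> (rect n m, rect n m) = bidiff \<beta> (rect n m, rect n m) \<and>
      theta n m ` (fst \<alpha> - fst \<beta>) = snd \<alpha> - snd \<beta> \<and>
      theta n m ` (fst \<beta> - fst \<alpha>) = snd \<beta> - snd \<alpha>)"
proof -
  obtain la mu la' mu' where \<alpha>: "\<alpha> = (la, mu)" and \<beta>: "\<beta> = (la', mu')"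
    by (cases \<alpha>, cases \<beta>)
  have part: "is_partition la" "is_partition mu" "is_partition la'" "is_partition mu'"
    using assms(4,5) by (simp_all add: \<alpha> \<beta> is_bipartition_def)
  then have fin: "finite la" "finite mu" "finite la'" "finite mu'"
    by (simp_all add: is_partition_def)
  have pos: "la \<subseteq> pos_boxes" "mu \<subseteq> pos_boxes" "la' \<subseteq> pos_boxes" "mu' \<subseteq> pos_boxes"
    using part by (simp_all add: partition_subset_pos_boxes)
  have "k \<noteq> 0"
    using assms(1) by auto
  then have "E_equiv k (of_nat n + of_nat m / k) \<alpha> \<beta> \<longleftrightarrow>
      (\<forall>s. signed_power_sum k n m (la, mu) s = signed_power_sum k n m (la', mu') s)"
    using pos by (simp add: \<alpha> \<beta> E_equiv_iff_signed_power_sums_eq)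
  then show ?thesis
    by (simp add: signed_power_sums_eq_iff[OF assms(1) fin pos] \<alpha> \<beta> bidiff_def)
qed

end
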